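(* Let $n\ge0$ and $l\ge0$. In $H^*(\operatorname{Gr}_2(\mathbb{R}^\infty);\mathbb{Z}/2)=\mathbb{Z}/2[w_1,w_2]$, $$Q_n(w_1\bar w_{2l}) = w_1\bar w_{2^{n+1}-1+2l}.$$
   Context: $w_1,w_2$ are the Stiefel–Whitney classes of the tautological $2$-plane bundle; $\bar w_k$ are defined by $(1+w_1+w_2)(1+\bar w_1+\bar w_2+\cdots)=1$, with $\bar w_0=1$. $Q_n$ is the Milnor primitive: $Q_0=Sq^1$, $Q_n=[Q_{n-1},Sq^{2^n}]$. *)

theory Defs
  imports "HOL-Library.Z2" "HOL-Computational_Algebra.Polynomial"
begin

text \<open>H^*(Gr_2(R^infty); Z/2) = Z/2[w1,w2] is modelled as the type bit poly poly:
 the outer variable is w2, the inner (coefficient) variable is w1.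
 The monomial w1^a w2^b has coefficient coeff (coeff p b) a.
 Grading: deg w1 = 1, deg w2 = 2.\<close>

type_synonym H = "bit poly poly"

definition w1 :: H where "w1 = [: [:0, 1:] :]"
definition w2 :: H where "w2 = [:0, 1:]"

definition comp :: "nat \<Rightarrow> H \<Rightarrow> H" where
  "comp d p = (\<Sum>b\<le>d div 2. monom (monom (coeff (coeff p b) (d - 2*b)) (d - 2*b)) b)"

definition degbound :: "H \<Rightarrow> nat" where
  "degbound p = 2 * degree p + (\<Sum>b\<le>degree p. degree (coeff p b)) + 1"

text \<open>Total Steenrod square Sq = Sq^0 + Sq^1 + ...: the ring endomorphism with
 Sq(w1) = w1 + w1^2 and Sq(w2) = w2 + w1 w2 + w2^2 (Cartan and Wu formulas).\<close>
definition tsq :: "H \<Rightarrow> H" where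
  "tsq p = poly (map_poly (\<lambda>c. poly (map_poly (\<lambda>a. [:[:a:]:]) c) (w1 + w1^2)) p)
                (w2 + w1 * w2 + w2^2)"

definition Sq :: "nat \<Rightarrow> H \<Rightarrow> H" where
  "Sq k p = (\<Sum>d<degbound p. comp (d + k) (tsq (comp d p)))"

fun Q :: "nat \<Rightarrow> H \<Rightarrow> H" where
  "Q 0 p = Sq 1 p"
| "Q (Suc n) p = Q n (Sq (2^Suc n) p) - Sq (2^Suc n) (Q n p)"

text \<open>Dual Stiefel-Whitney classes, defined by (1+w1+w2)(1+wbar_1+wbar_2+...) = 1,
 i.e. wbar_0 = 1 and wbar_k + w1 wbar_{k-1} + w2 wbar_{k-2} = 0 (wbar_{-1} = 0).\<close>
fun wbar :: "nat \<Rightarrow> H" where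
  "wbar 0 = 1"
| "wbar (Suc 0) = - w1"
| "wbar (Suc (Suc k)) = - (w1 * wbar (Suc k) + w2 * wbar k)"

end

theory Submission
  imports Defs
begin

(* Everything is pulled back along the splitting map \<iota> : Z/2[w1,w2] -> Z/2[x1,x2],
   w1 -> x1 + x2, w2 -> x1 x2, which is injective and respects the gradings (deg x1 = deg x2 = 1)
   and the total Steenrod square, the ring endomorphism x_i -> x_i + x_i^2 of Z/2[x1,x2].
   For h homogeneous of degree e the parts of Sq(h) of degree e and e + 1 are h and
   x1^2 dh/dx1 + x2^2 dh/dx2, so Q_0 = Sq^1 becomes the derivation D_0, where
   D_n = x1^(2^(n+1)) d/dx1 + x2^(2^(n+1)) d/dx2.  Since Sq commutes with d/dx_i and
   (x + x^2)^(2^(n+1)) = x^(2^(n+1)) + x^(2^(n+2)), the commutator of D_n and Sq^(2^(n+1)) is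
   D_(n+1), so Q_n becomes D_n.  Finally \<iota>(w1 wbar_k) = x1^(k+1) + x2^(k+1), and D_n sends
   x1^(2l+1) + x2^(2l+1) to x1^(2^(n+1)+2l) + x2^(2^(n+1)+2l). *)

section \<open>Rings of characteristic two\<close>

class char2 = comm_ring_1 +
  assumes one_plus_one_eq_zero: "1 + 1 = 0"

instance bit :: char2
  by standard simp

instance poly :: (char2) char2
proof
  have "(1::'a poly) + 1 = [:1 + 1:]"
    by (simp add: one_pCons)
  also have "\<dots> = 0"
    by (simp only: one_plus_one_eq_zero) simp
  finally show "(1::'a poly) + 1 = 0" .
qed

lemma numeral_2_char2 [simp]: "(2::'a::char2) = 0"
  by (simp only: one_add_one[symmetric] one_plus_one_eq_zero)

lemma add_self_char2 [simp]: "(a::'a::char2) + a = 0"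
  by (simp flip: mult_2)

lemma uminus_char2 [simp]: "- (a::'a::char2) = a"
  by (rule minus_unique) simp

lemma diff_char2 [simp]: "(a::'a::char2) - b = a + b"
  by (simp add: diff_conv_add_uminus del: add_uminus_conv_diff)

lemma of_nat_char2: "(of_nat k :: 'a::char2) = (if even k then 0 else 1)"
  by (induction k) (auto simp: one_plus_one_eq_zero)

lemma power_two_power_add_char2: "((a::'a::char2) + b) ^ 2 ^ k = a ^ 2 ^ k + b ^ 2 ^ k"
proof (induction k)
  case (Suc k)
  have "(a + b) ^ 2 ^ Suc k = ((a + b) ^ 2 ^ k)\<^sup>2"
    by (simp add: power_mult[symmetric] mult.commute)
  also have "\<dots> = (a ^ 2 ^ k)\<^sup>2 + (b ^ 2 ^ k)\<^sup>2"
    by (simp add: Suc power2_eq_square algebra_simps)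
  finally show ?case
    by (simp add: power_mult[symmetric] mult.commute)
qed simp

section \<open>Ring homomorphisms, substitution and derivations\<close>

definition ring_hom :: "('a::comm_ring_1 \<Rightarrow> 'b::comm_ring_1) \<Rightarrow> bool" where
  "ring_hom h \<longleftrightarrow>
     (\<forall>a b. h (a + b) = h a + h b) \<and> (\<forall>a b. h (a * b) = h a * h b) \<and> h 1 = 1"

lemma ring_hom_add: "ring_hom h \<Longrightarrow> h (a + b) = h a + h b"
  and ring_hom_mult: "ring_hom h \<Longrightarrow> h (a * b) = h a * h b"
  and ring_hom_one: "ring_hom h \<Longrightarrow> h 1 = 1"
  by (simp_all add: ring_hom_def)

lemma ring_hom_zero: "ring_hom h \<Longrightarrow> h 0 = 0"
  using ring_hom_add[of h 0 0] by simp

lemma ring_hom_power: "ring_hom h \<Longrightarrow> h (a ^ k) = h a ^ k"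
  by (induction k) (simp_all add: ring_hom_one ring_hom_mult)

lemma ring_hom_sum: "ring_hom h \<Longrightarrow> h (\<Sum>i\<in>A. f i) = (\<Sum>i\<in>A. h (f i))"
  using sum_comp_morphism[of h f A] by (simp add: ring_hom_zero ring_hom_add)

lemma ring_hom_id: "ring_hom id"
  and ring_hom_compose: "ring_hom h \<Longrightarrow> ring_hom g \<Longrightarrow> ring_hom (h \<circ> g)"
  and ring_hom_poly: "ring_hom (\<lambda>p. poly p x)"
  by (simp_all add: ring_hom_def)

lemma ring_hom_map_poly:
  assumes h: "ring_hom h"
  shows "ring_hom (map_poly h)"
proof -
  have add: "map_poly h (p + q) = map_poly h p + map_poly h q" for p q
    by (intro poly_eqI) (simp add: coeff_map_poly ring_hom_zero ring_hom_add h)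
  have "map_poly h (p * q) = map_poly h p * map_poly h q" for p q
  proof (induction p)
    case (pCons a p)
    have "map_poly h (smult a q) = smult (h a) (map_poly h q)"
      by (rule map_poly_smult) (simp_all add: ring_hom_zero ring_hom_mult h)
    with pCons show ?case
      by (simp add: add map_poly_pCons ring_hom_zero h)
  qed (simp add: ring_hom_zero h)
  with add show ?thesis
    unfolding ring_hom_def[of "map_poly h"] by (simp add: ring_hom_one h)
qed

definition of_bit :: "bit \<Rightarrow> 'a::char2" where
  "of_bit b = (if b = 0 then 0 else 1)"

lemma of_bit_simps [simp]: "of_bit 0 = 0" "of_bit 1 = 1"
  by (simp_all add: of_bit_def)

lemma ring_hom_of_bit: "ring_hom (of_bit :: bit \<Rightarrow> 'a::char2)"
  unfolding ring_hom_def
proof (intro conjI allI)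
  fix a b :: bit
  show "(of_bit (a + b) :: 'a) = of_bit a + of_bit b"
    by (cases a; cases b) (simp_all add: one_plus_one_eq_zero)
  show "(of_bit (a * b) :: 'a) = of_bit a * of_bit b"
    by (cases a; cases b) simp_all
qed simp

lemma ring_hom_of_bit_commute: "ring_hom h \<Longrightarrow> h (of_bit a) = of_bit a"
  by (cases a) (simp_all add: ring_hom_zero ring_hom_one)

lemma of_bit_H: "(of_bit a :: H) = [:[:a:]:]"
  by (cases a) (simp_all add: pCons_one)

definition eval1 :: "'a::char2 \<Rightarrow> bit poly \<Rightarrow> 'a" where
  "eval1 f c = poly (map_poly of_bit c) f"

definition eval2 :: "'a::char2 \<Rightarrow> 'a \<Rightarrow> H \<Rightarrow> 'a" where
  "eval2 f g p = poly (map_poly (eval1 f) p) g"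

lemma ring_hom_eval1: "ring_hom (eval1 f)"
proof -
  have "eval1 f = (\<lambda>c. poly c f) \<circ> map_poly of_bit"
    by (auto simp: eval1_def)
  then show ?thesis
    by (simp add: ring_hom_compose ring_hom_poly ring_hom_map_poly ring_hom_of_bit)
qed

lemma ring_hom_eval2: "ring_hom (eval2 f g)"
proof -
  have "eval2 f g = (\<lambda>p. poly p g) \<circ> map_poly (eval1 f)"
    by (auto simp: eval2_def)
  then show ?thesis
    by (simp add: ring_hom_compose ring_hom_poly ring_hom_map_poly ring_hom_eval1)
qed

lemma eval1_0 [simp]: "eval1 f 0 = 0"
  and eval1_pCons: "eval1 f (pCons a c) = of_bit a + f * eval1 f c"
  and eval2_0 [simp]: "eval2 f g 0 = 0"
  and eval2_pCons: "eval2 f g (pCons c p) = eval1 f c + g * eval2 f g p"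
  by (simp_all add: eval1_def eval2_def map_poly_pCons)

lemma eval1_1 [simp]: "eval1 f 1 = 1"
  by (rule ring_hom_one[OF ring_hom_eval1])

lemma eval2_w1 [simp]: "eval2 f g w1 = f"
  and eval2_w2 [simp]: "eval2 f g w2 = g"
  by (simp_all add: w1_def w2_def eval2_pCons eval1_pCons)

lemma eval2_w1_w2 [simp]: "eval2 w1 w2 p = p"
proof -
  have "eval1 w1 c = [:c:]" for c
    by (induction c) (simp_all add: eval1_pCons of_bit_H w1_def)
  then show ?thesis
    by (induction p) (simp_all add: eval2_pCons w2_def)
qed

lemma ring_hom_eval1_commute: "ring_hom h \<Longrightarrow> h (eval1 f c) = eval1 (h f) c"
  by (induction c)
    (simp_all add: eval1_pCons ring_hom_add ring_hom_mult ring_hom_zero ring_hom_of_bit_commute)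

lemma ring_hom_eval2_commute: "ring_hom h \<Longrightarrow> h (eval2 f g p) = eval2 (h f) (h g) p"
  by (induction p)
    (simp_all add: eval2_pCons ring_hom_add ring_hom_mult ring_hom_zero ring_hom_eval1_commute)

lemmas eval2_add = ring_hom_add[OF ring_hom_eval2]
  and eval2_mult = ring_hom_mult[OF ring_hom_eval2]
  and eval2_power = ring_hom_power[OF ring_hom_eval2]

definition derivation_along ::
    "('a::comm_ring_1 \<Rightarrow> 'b::comm_ring_1) \<Rightarrow> ('a \<Rightarrow> 'b) \<Rightarrow> bool" where
  "derivation_along \<delta> \<phi> \<longleftrightarrow> (\<forall>a b. \<delta> (a + b) = \<delta> a + \<delta> b) \<and>
     (\<forall>a b. \<delta> (a * b) = \<delta> a * \<phi> b + \<phi> a * \<delta> b) \<and> \<delta> 1 = 0"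

lemma derivation_along_add: "derivation_along \<delta> \<phi> \<Longrightarrow> \<delta> (a + b) = \<delta> a + \<delta> b"
  and derivation_along_mult:
    "derivation_along \<delta> \<phi> \<Longrightarrow> \<delta> (a * b) = \<delta> a * \<phi> b + \<phi> a * \<delta> b"
  and derivation_along_one: "derivation_along \<delta> \<phi> \<Longrightarrow> \<delta> 1 = 0"
  by (simp_all add: derivation_along_def)

lemma derivation_along_zero: "derivation_along \<delta> \<phi> \<Longrightarrow> \<delta> 0 = 0"
  using derivation_along_add[of \<delta> \<phi> 0 0] by simp

lemma derivation_along_of_bit: "derivation_along \<delta> \<phi> \<Longrightarrow> \<delta> (of_bit a) = 0"
  by (cases a) (simp_all add: derivation_along_zero derivation_along_one)

(* The derivative in w1; the derivative in w2 is pderiv. *)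
definition pderiv1 :: "H \<Rightarrow> H" where
  "pderiv1 p = map_poly pderiv p"

lemma pderiv1_0 [simp]: "pderiv1 0 = 0"
  and pderiv1_pCons: "pderiv1 (pCons c p) = pCons (pderiv c) (pderiv1 p)"
  and coeff_pderiv1: "coeff (pderiv1 p) j = pderiv (coeff p j)"
  by (simp_all add: pderiv1_def map_poly_pCons coeff_map_poly)

lemma pderiv1_add: "pderiv1 (p + q) = pderiv1 p + pderiv1 q"
  by (intro poly_eqI) (simp add: coeff_pderiv1 pderiv_add)

lemma pderiv1_mult: "pderiv1 (p * q) = pderiv1 p * q + p * pderiv1 q"
proof (induction p)
  case (pCons c p)
  have "pderiv1 (smult c q) = smult c (pderiv1 q) + smult (pderiv c) q"
    by (intro poly_eqI) (simp add: coeff_pderiv1 pderiv_mult algebra_simps)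
  with pCons show ?case
    by (simp add: pderiv1_pCons pderiv1_add algebra_simps)
qed simp

lemma derivation_along_pderiv1: "derivation_along pderiv1 id"
  and derivation_along_pderiv: "derivation_along (pderiv :: H \<Rightarrow> H) id"
  by (simp_all add: derivation_along_def pderiv1_add pderiv1_mult pderiv_add pderiv_mult
      algebra_simps pderiv1_pCons flip: pCons_one)

lemma pderiv1_1 [simp]: "pderiv1 1 = 0"
  by (rule derivation_along_one[OF derivation_along_pderiv1])

lemma pderiv1_w1 [simp]: "pderiv1 w1 = 1"
  and pderiv1_w2 [simp]: "pderiv1 w2 = 0"
  and pderiv_w1 [simp]: "pderiv w1 = 0"
  and pderiv_w2 [simp]: "pderiv w2 = 1"
  by (simp_all add: w1_def w2_def pderiv1_pCons pderiv_pCons flip: pCons_one)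

lemma derivation_along_coeff_1: "derivation_along (\<lambda>r. coeff r 1) (\<lambda>r. coeff r 0)"
  by (simp add: derivation_along_def coeff_mult mult.commute)

lemma ring_hom_coeff_0: "ring_hom (\<lambda>r. coeff r 0)"
  by (simp add: ring_hom_def coeff_mult_0)

lemma eval2_chain_rule:
  assumes \<phi>: "ring_hom \<phi>" and \<delta>: "derivation_along \<delta> \<phi>"
  shows "\<delta> (eval2 f g p) =
    eval2 (\<phi> f) (\<phi> g) (pderiv1 p) * \<delta> f + eval2 (\<phi> f) (\<phi> g) (pderiv p) * \<delta> g"
proof (induction p)
  case (pCons c p)
  have "\<delta> (eval1 f c) = eval1 (\<phi> f) (pderiv c) * \<delta> f"
  proof (induction c)
    case (pCons a c)
    show ?case
      using \<phi> \<delta> pCons.IH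
      by (simp add: eval1_pCons derivation_along_add derivation_along_mult derivation_along_of_bit
          ring_hom_eval1_commute pderiv_pCons ring_hom_add[OF ring_hom_eval1] algebra_simps)
  qed (simp add: derivation_along_zero[OF \<delta>])
  with pCons.IH show ?case
    using \<phi> \<delta>
    by (simp add: eval2_pCons pderiv1_pCons derivation_along_add derivation_along_mult
        ring_hom_eval1_commute ring_hom_eval2_commute pderiv_pCons eval2_add algebra_simps)
qed (simp add: derivation_along_zero[OF \<delta>])

section \<open>Gradings\<close>

definition scale_vars :: "nat \<Rightarrow> nat \<Rightarrow> H \<Rightarrow> H poly" where
  "scale_vars \<alpha> \<beta> p = eval2 (monom w1 \<alpha>) (monom w2 \<beta>) p"

lemma ring_hom_scale_vars: "ring_hom (scale_vars \<alpha> \<beta>)"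
  using ring_hom_eval2 by (auto simp: scale_vars_def[abs_def])

lemma coeff_scale_vars:
  assumes "\<alpha> > 0" "\<beta> > 0"
  shows "coeff (coeff (coeff (scale_vars \<alpha> \<beta> p) d) j) i =
    (if \<alpha> * i + \<beta> * j = d then coeff (coeff p j) i else 0)"
proof -
  have of_bit_H_poly: "(of_bit a :: H poly) = [:of_bit a:]" for a
    by (cases a) (simp_all add: pCons_one)
  have eval1: "coeff (coeff (coeff (eval1 (monom w1 \<alpha>) c) d) j) i =
      (if j = 0 \<and> \<alpha> * i = d then coeff c i else 0)" for c d j i
    using assms(1)
    by (induction c arbitrary: d i)
      (auto simp: eval1_pCons of_bit_H_poly of_bit_H coeff_monom_mult w1_def coeff_pCons
        split: nat.split)
  show ?thesis
    using assms(2)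
  proof (induction p arbitrary: d j)
    case (pCons c p)
    then show ?case
      by (auto simp: scale_vars_def eval2_pCons eval1 coeff_monom_mult w2_def coeff_pCons
          split: nat.split)
  qed (simp add: scale_vars_def)
qed

lemma comp_eq_coeff_scale_vars: "comp d p = coeff (scale_vars 1 2 p) d"
proof -
  have "coeff (coeff (comp d p) j) i = (if i + 2 * j = d then coeff (coeff p j) i else 0)" for j i
  proof -
    have "coeff (comp d p) j =
        (if j \<le> d div 2 then monom (coeff (coeff p j) (d - 2 * j)) (d - 2 * j) else 0)"
      by (simp add: comp_def coeff_sum coeff_monom sum.delta)
    then show ?thesis
      by (auto simp: coeff_monom)
  qed
  then show ?thesis
    by (intro poly_eqI) (simp add: coeff_scale_vars)
qed

(* From here on H is also read as the splitting ring Z/2[x1,x2] with x1 = w1 and x2 = w2,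
   graded by deg x1 = deg x2 = 1; the suffix P marks notions for this reading. *)
definition compP :: "nat \<Rightarrow> H \<Rightarrow> H" where
  "compP d q = coeff (scale_vars 1 1 q) d"

lemma coeff_compP:
  "coeff (coeff (compP d q) j) i = (if i + j = d then coeff (coeff q j) i else 0)"
  using coeff_scale_vars[of 1 1 q d j i] by (simp add: compP_def)

lemma compP_add: "compP d (a + b) = compP d a + compP d b"
  and compP_0 [simp]: "compP d 0 = 0"
  by (simp_all add: compP_def ring_hom_add[OF ring_hom_scale_vars]
      ring_hom_zero[OF ring_hom_scale_vars])

lemma compP_compP: "compP d (compP e q) = (if d = e then compP e q else 0)"
  by (intro poly_eqI) (simp add: coeff_compP)

lemma compP_eq_0: "degree (scale_vars 1 1 q) < d \<Longrightarrow> compP d q = 0"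
  by (simp add: compP_def coeff_eq_0)

lemma sum_compP: "(\<Sum>d\<le>degree (scale_vars 1 1 q). compP d q) = q"
proof -
  have "(\<Sum>d\<le>degree (scale_vars 1 1 q). compP d q) = poly (scale_vars 1 1 q) 1"
    by (simp add: poly_altdef compP_def)
  also have "\<dots> = eval2 (poly (monom w1 1) 1) (poly (monom w2 1) 1) q"
    by (simp add: scale_vars_def ring_hom_eval2_commute[OF ring_hom_poly])
  finally show ?thesis
    by (simp add: poly_monom)
qed

lemma additive_eq_on_compP:
  fixes F G :: "H \<Rightarrow> H"
  assumes "\<And>a b. F (a + b) = F a + F b" and "\<And>a b. G (a + b) = G a + G b"
    and "\<And>d q. F (compP d q) = G (compP d q)"
  shows "F = G"
proof
  fix q
  have sum: "H (\<Sum>d\<in>A. compP d q) = (\<Sum>d\<in>A. H (compP d q))"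
    if "\<And>a b. H (a + b) = H a + H b" for H :: "H \<Rightarrow> H" and A
    using sum_comp_morphism[of H "\<lambda>d. compP d q" A] that[of 0 0] that by simp
  have "F q = F (\<Sum>d\<le>degree (scale_vars 1 1 q). compP d q)"
    by (simp only: sum_compP)
  also have "\<dots> = G (\<Sum>d\<le>degree (scale_vars 1 1 q). compP d q)"
    by (simp add: sum assms)
  finally show "F q = G q"
    by (simp only: sum_compP)
qed

definition homogeneous :: "nat \<Rightarrow> H \<Rightarrow> bool" where
  "homogeneous m a \<longleftrightarrow> scale_vars 1 1 a = monom a m"

lemma homogeneous_compP: "homogeneous e (compP e q)"
  unfolding homogeneous_def
  by (rule poly_eqI) (metis compP_def compP_compP coeff_monom)

lemma compP_mult_homogeneous:
  "homogeneous m a \<Longrightarrow> compP d (a * b) = (if m \<le> d then a * compP (d - m) b else 0)"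
  by (simp add: homogeneous_def compP_def ring_hom_mult[OF ring_hom_scale_vars] coeff_monom_mult)

lemma homogeneous_w1_power: "homogeneous m (w1 ^ m)"
  and homogeneous_w2_power: "homogeneous m (w2 ^ m)"
  by (simp_all add: homogeneous_def scale_vars_def eval2_power monom_power)

lemmas compP_w1_power_mult = compP_mult_homogeneous[OF homogeneous_w1_power]
  and compP_w2_power_mult = compP_mult_homogeneous[OF homogeneous_w2_power]

lemma compP_pderiv1: "compP d (pderiv1 q) = pderiv1 (compP (Suc d) q)"
  and pderiv1_compP_0: "pderiv1 (compP 0 q) = 0"
  and compP_pderiv: "compP d (pderiv q) = pderiv (compP (Suc d) q)"
  and pderiv_compP_0: "pderiv (compP 0 q) = 0"
  by (intro poly_eqI; simp add: coeff_compP coeff_pderiv1 coeff_pderiv of_nat_char2)+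

section \<open>Steenrod operations on the splitting ring\<close>

definition QP :: "nat \<Rightarrow> H \<Rightarrow> H" where
  "QP n q = w1 ^ 2 ^ (n + 1) * pderiv1 q + w2 ^ 2 ^ (n + 1) * pderiv q"

lemma QP_add: "QP n (a + b) = QP n a + QP n b"
  by (simp add: QP_def pderiv1_add pderiv_add algebra_simps)

lemma QP_compP: "compP (m + (2 ^ (n + 1) - 1)) (QP n q) = QP n (compP m q)"
proof (cases m)
  case 0
  have "\<not> 2 ^ (n + 1) \<le> 2 ^ (n + 1) - (1::nat)"
    using zero_less_power[of "2::nat" "n + 1"] by linarith
  with 0 show ?thesis
    by (simp add: QP_def compP_add compP_w1_power_mult compP_w2_power_mult
        pderiv1_compP_0 pderiv_compP_0)
next
  case (Suc e)
  then have "m + (2 ^ (n + 1) - 1) = 2 ^ (n + 1) + e"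
    by simp
  with Suc show ?thesis
    by (simp add: QP_def compP_add compP_w1_power_mult compP_w2_power_mult
        compP_pderiv1 compP_pderiv)
qed

definition tsqP :: "H \<Rightarrow> H" where
  "tsqP q = eval2 (w1 + w1\<^sup>2) (w2 + w2\<^sup>2) q"

lemma ring_hom_tsqP: "ring_hom tsqP"
  using ring_hom_eval2 by (auto simp: tsqP_def[abs_def])

lemma pderiv1_tsqP: "pderiv1 (tsqP q) = tsqP (pderiv1 q)"
  and pderiv_tsqP: "pderiv (tsqP q) = tsqP (pderiv q)"
  using eval2_chain_rule[OF ring_hom_id derivation_along_pderiv1, of "w1 + w1\<^sup>2" "w2 + w2\<^sup>2"]
    eval2_chain_rule[OF ring_hom_id derivation_along_pderiv, of "w1 + w1\<^sup>2" "w2 + w2\<^sup>2"]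
  by (simp_all add: tsqP_def pderiv1_add pderiv1_mult pderiv_add pderiv_mult power2_eq_square)

lemma compP_tsqP_homogeneous:
  assumes "homogeneous e g"
  shows "compP (e + d) (tsqP g) = coeff (eval2 [:w1, w1\<^sup>2:] [:w2, w2\<^sup>2:] g) d"
proof -
  (* \<Phi> substitutes w_i -> w_i + t w_i^2 in the coefficients and fixes t, so it sends t w_i to
     t w_i + t^2 w_i^2, and hence scale_vars 1 1 g = t^e g to scale_vars 1 1 (tsqP g). *)
  define \<Phi> :: "H poly \<Rightarrow> H poly" where
    "\<Phi> r = poly (map_poly (eval2 [:w1, w1\<^sup>2:] [:w2, w2\<^sup>2:]) r) [:0, 1:]" for r
  have "\<Phi> = (\<lambda>r. poly r [:0, 1:]) \<circ> map_poly (eval2 [:w1, w1\<^sup>2:] [:w2, w2\<^sup>2:])"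
    by (auto simp: \<Phi>_def)
  then have \<Phi>: "ring_hom \<Phi>"
    by (simp add: ring_hom_compose ring_hom_poly ring_hom_map_poly ring_hom_eval2)
  have monom_Suc_0: "monom a (Suc 0) + (monom a (Suc 0))\<^sup>2 = [:0, a, a\<^sup>2:]" for a :: H
    by (simp add: monom_Suc monom_0 power2_eq_square)
  have "scale_vars 1 1 (tsqP g) =
      eval2 (scale_vars 1 1 (w1 + w1\<^sup>2)) (scale_vars 1 1 (w2 + w2\<^sup>2)) g"
    by (simp add: tsqP_def ring_hom_eval2_commute[OF ring_hom_scale_vars])
  also have "\<dots> = eval2 (\<Phi> (monom w1 1)) (\<Phi> (monom w2 1)) g"
    by (simp add: scale_vars_def eval2_add eval2_power \<Phi>_def map_poly_monom poly_monom
        monom_Suc_0)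
  also have "\<dots> = \<Phi> (scale_vars 1 1 g)"
    by (simp add: scale_vars_def ring_hom_eval2_commute[OF \<Phi>])
  also have "\<dots> = monom 1 e * eval2 [:w1, w1\<^sup>2:] [:w2, w2\<^sup>2:] g"
    using assms unfolding homogeneous_def
    by (simp add: \<Phi>_def map_poly_monom poly_monom) (simp add: monom_altdef mult.commute)
  finally show ?thesis
    by (simp add: compP_def coeff_monom_mult)
qed

lemma compP_tsqP_lowest: "homogeneous e g \<Longrightarrow> compP e (tsqP g) = g"
  using compP_tsqP_homogeneous[of e g 0]
    ring_hom_eval2_commute[OF ring_hom_coeff_0, of "[:w1, w1\<^sup>2:]" "[:w2, w2\<^sup>2:]" g]
  by simp

lemma compP_tsqP_next: "homogeneous e g \<Longrightarrow> compP (Suc e) (tsqP g) = QP 0 g"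
  using compP_tsqP_homogeneous[of e g 1]
    eval2_chain_rule[OF ring_hom_coeff_0 derivation_along_coeff_1,
      of "[:w1, w1\<^sup>2:]" "[:w2, w2\<^sup>2:]" g]
  by (simp add: QP_def mult.commute)

definition SqP :: "nat \<Rightarrow> H \<Rightarrow> H" where
  "SqP k q = (\<Sum>d\<le>degree (scale_vars 1 1 q). compP (d + k) (tsqP (compP d q)))"

lemma SqP_eq_sum:
  assumes "\<And>d. L \<le> d \<Longrightarrow> compP d q = 0"
  shows "SqP k q = (\<Sum>d<L. compP (d + k) (tsqP (compP d q)))"
proof -
  let ?f = "\<lambda>d. compP (d + k) (tsqP (compP d q))"
  define M where "M = max L (Suc (degree (scale_vars 1 1 q)))"
  have vanish: "?f d = 0" if "L \<le> d \<or> degree (scale_vars 1 1 q) < d" for d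
    using that assms compP_eq_0 by (auto simp: ring_hom_zero[OF ring_hom_tsqP])
  have "SqP k q = sum ?f {..<M}"
    unfolding SqP_def by (rule sum.mono_neutral_left) (auto simp: M_def vanish)
  also have "\<dots> = sum ?f {..<L}"
    by (rule sum.mono_neutral_right) (auto simp: M_def vanish)
  finally show ?thesis .
qed

lemma SqP_add: "SqP k (a + b) = SqP k a + SqP k b"
proof -
  define L where "L = Suc (degree (scale_vars 1 1 a) + degree (scale_vars 1 1 b))"
  have "compP d a = 0" "compP d b = 0" if "L \<le> d" for d
    using that compP_eq_0 by (auto simp: L_def)
  then show ?thesis
    by (simp add: SqP_eq_sum[of L] compP_add ring_hom_add[OF ring_hom_tsqP] sum.distrib)
qed

lemma SqP_compP: "SqP k (compP e q) = compP (e + k) (tsqP (compP e q))"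
  by (simp add: SqP_eq_sum[of "Suc e"] compP_compP ring_hom_zero[OF ring_hom_tsqP])

lemma SqP_1: "SqP 1 = QP 0"
  by (rule additive_eq_on_compP)
    (simp_all add: SqP_add QP_add SqP_compP compP_tsqP_next homogeneous_compP)

lemma tsqP_QP:
  "QP n (tsqP q) + tsqP (QP n q) =
    w1 ^ 2 ^ (n + 2) * tsqP (pderiv1 q) + w2 ^ 2 ^ (n + 2) * tsqP (pderiv q)"
proof -
  have tsqP_power: "tsqP (x ^ 2 ^ (n + 1)) = x ^ 2 ^ (n + 1) + x ^ 2 ^ (n + 2)"
    if "tsqP x = x + x\<^sup>2" for x
    using that power_two_power_add_char2[of x "x\<^sup>2" "n + 1"]
    by (simp add: ring_hom_power[OF ring_hom_tsqP] power_mult[symmetric])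
  have "tsqP (w1 ^ 2 ^ (n + 1)) = w1 ^ 2 ^ (n + 1) + w1 ^ 2 ^ (n + 2)"
    and "tsqP (w2 ^ 2 ^ (n + 1)) = w2 ^ 2 ^ (n + 1) + w2 ^ 2 ^ (n + 2)"
    by (rule tsqP_power, simp add: tsqP_def)+
  then show ?thesis
    unfolding QP_def pderiv1_tsqP pderiv_tsqP ring_hom_add[OF ring_hom_tsqP]
      ring_hom_mult[OF ring_hom_tsqP]
    by (simp add: algebra_simps)
qed

lemma QP_Suc: "(\<lambda>q. QP n (SqP (2 ^ (n + 1)) q) + SqP (2 ^ (n + 1)) (QP n q)) = QP (Suc n)"
proof (rule additive_eq_on_compP)
  fix e q
  let ?N = "2 ^ (n + 1) :: nat"
  let ?h = "compP e q"
  have "QP n (SqP ?N ?h) = compP (e + ?N + (?N - 1)) (QP n (tsqP ?h))"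
    by (simp add: SqP_compP flip: QP_compP)
  moreover have "SqP ?N (QP n ?h) = compP (e + ?N + (?N - 1)) (tsqP (QP n ?h))"
    by (metis SqP_compP QP_compP add.commute add.left_commute)
  ultimately have "QP n (SqP ?N ?h) + SqP ?N (QP n ?h) =
      compP (e + ?N + (?N - 1)) (QP n (tsqP ?h) + tsqP (QP n ?h))"
    by (simp only: compP_add)
  also have "\<dots> = compP (e + ?N + (?N - 1))
      (w1 ^ 2 ^ (n + 2) * tsqP (pderiv1 ?h) + w2 ^ 2 ^ (n + 2) * tsqP (pderiv ?h))"
    by (simp only: tsqP_QP)
  also have "\<dots> = QP (Suc n) ?h"
  proof (cases e)
    case 0
    then show ?thesis
      by (simp add: QP_def pderiv1_compP_0 pderiv_compP_0 ring_hom_zero[OF ring_hom_tsqP])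
  next
    case (Suc e')
    have degree: "Suc e' + ?N + (?N - 1) = 2 ^ (n + 2) + e'"
      by simp
    show ?thesis
      unfolding Suc degree
      by (simp add: QP_def compP_add compP_w1_power_mult compP_w2_power_mult
          compP_tsqP_lowest homogeneous_compP flip: compP_pderiv1 compP_pderiv)
  qed
  finally show "QP n (SqP ?N ?h) + SqP ?N (QP n ?h) = QP (Suc n) ?h" .
qed (simp_all add: QP_add SqP_add)

section \<open>The splitting map\<close>

definition splitting_map :: "H \<Rightarrow> H" where
  "splitting_map p = eval2 (w1 + w2) (w1 * w2) p"

lemma ring_hom_splitting_map: "ring_hom splitting_map"
  using ring_hom_eval2 by (auto simp: splitting_map_def[abs_def])

lemmas splitting_map_add = ring_hom_add[OF ring_hom_splitting_map]
  and splitting_map_mult = ring_hom_mult[OF ring_hom_splitting_map]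

lemma splitting_map_tsq: "splitting_map (tsq p) = tsqP (splitting_map p)"
proof -
  have tsq_eq_eval2: "tsq p = eval2 (w1 + w1\<^sup>2) (w2 + w1 * w2 + w2\<^sup>2) p"
    using ext[of "of_bit :: bit \<Rightarrow> H", OF of_bit_H]
    by (simp add: tsq_def eval2_def eval1_def[abs_def])
  have "splitting_map (tsq p) =
      eval2 (splitting_map (w1 + w1\<^sup>2)) (splitting_map (w2 + w1 * w2 + w2\<^sup>2)) p"
    by (simp add: tsq_eq_eval2 ring_hom_eval2_commute[OF ring_hom_splitting_map])
  also have "\<dots> = eval2 (tsqP (w1 + w2)) (tsqP (w1 * w2)) p"
    by (simp add: splitting_map_def tsqP_def eval2_add eval2_mult power2_eq_square algebra_simps)
  also have "\<dots> = tsqP (splitting_map p)"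
    by (simp add: splitting_map_def ring_hom_eval2_commute[OF ring_hom_tsqP])
  finally show ?thesis .
qed

lemma compP_splitting_map: "compP d (splitting_map p) = splitting_map (comp d p)"
proof -
  have "scale_vars 1 1 (splitting_map p) =
      eval2 (scale_vars 1 1 (w1 + w2)) (scale_vars 1 1 (w1 * w2)) p"
    by (simp add: splitting_map_def ring_hom_eval2_commute[OF ring_hom_scale_vars])
  also have "\<dots> = eval2 (monom (w1 + w2) 1) (monom (w1 * w2) 2) p"
    by (simp add: scale_vars_def eval2_add eval2_mult add_monom mult_monom numeral_2_eq_2)
  also have "\<dots> = map_poly splitting_map (scale_vars 1 2 p)"
    by (simp add: scale_vars_def map_poly_monom ring_hom_zero[OF ring_hom_splitting_map]
        ring_hom_eval2_commute[OF ring_hom_map_poly[OF ring_hom_splitting_map]])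
      (simp add: splitting_map_def eval2_add eval2_mult)
  finally show ?thesis
    by (simp add: compP_def comp_eq_coeff_scale_vars coeff_map_poly
        ring_hom_zero[OF ring_hom_splitting_map])
qed

lemma comp_eq_0: "degbound p \<le> d \<Longrightarrow> comp d p = 0"
proof (rule poly_eqI)
  fix j
  assume d: "degbound p \<le> d"
  have "coeff (coeff p j) (d - 2 * j) = 0"
  proof (cases "j \<le> degree p")
    case True
    have "degree (coeff p j) \<le> (\<Sum>b\<le>degree p. degree (coeff p b))"
      by (rule member_le_sum) (use True in auto)
    with d True have "degree (coeff p j) < d - 2 * j"
      by (simp add: degbound_def)
    then show ?thesis
      by (simp add: coeff_eq_0)
  qed (simp add: coeff_eq_0)
  then show "coeff (comp d p) j = coeff 0 j"
    by (simp add: comp_def coeff_sum coeff_monom)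
qed

lemma splitting_map_Sq: "splitting_map (Sq k p) = SqP k (splitting_map p)"
proof -
  have "compP d (splitting_map p) = 0" if "degbound p \<le> d" for d
    using that
    by (simp add: compP_splitting_map comp_eq_0 ring_hom_zero[OF ring_hom_splitting_map])
  then show ?thesis
    by (simp add: Sq_def SqP_eq_sum[of "degbound p"] ring_hom_sum[OF ring_hom_splitting_map]
        compP_splitting_map splitting_map_tsq flip: compP_splitting_map)
qed

lemma splitting_map_Q: "splitting_map (Q n p) = QP n (splitting_map p)"
proof (induction n arbitrary: p)
  case 0
  show ?case
    using SqP_1 by (simp add: splitting_map_Sq)
next
  case (Suc n)
  have "splitting_map (Q (Suc n) p) =
      QP n (SqP (2 ^ Suc n) (splitting_map p)) + SqP (2 ^ Suc n) (QP n (splitting_map p))"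
    by (simp add: splitting_map_add splitting_map_Sq Suc.IH)
  also have "\<dots> = QP (Suc n) (splitting_map p)"
    using fun_cong[OF QP_Suc[of n], of "splitting_map p"] by simp
  finally show ?case .
qed

lemma splitting_map_w1 [simp]: "splitting_map w1 = w1 + w2"
  and splitting_map_w2 [simp]: "splitting_map w2 = w1 * w2"
  by (simp_all add: splitting_map_def)

lemma pCons_0_eq_w2_mult: "pCons 0 p = w2 * p"
  by (simp add: w2_def)

(* Setting x1 = 0 shows that the w2-free part of p vanishes; then cancel \<iota> w2 = x1 x2. *)
lemma splitting_map_eq_0_iff: "splitting_map p = 0 \<longleftrightarrow> p = 0"
proof
  show "splitting_map p = 0 \<Longrightarrow> p = 0"
  proof (induction p)
    case (pCons c p)
    have "eval2 0 w2 (splitting_map (pCons c p)) = eval2 w2 0 (pCons c p)"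
      by (simp add: splitting_map_def ring_hom_eval2_commute[OF ring_hom_eval2]
          eval2_add eval2_mult)
    then have "eval1 w2 c = 0"
      using pCons.prems by (simp add: eval2_pCons ring_hom_zero[OF ring_hom_eval2])
    moreover have "eval1 w2 c = 0 \<Longrightarrow> c = 0" for c
      by (induction c) (simp_all add: eval1_pCons of_bit_H w2_def)
    ultimately have "c = 0"
      by blast
    then have "w1 * w2 * splitting_map p = 0"
      using pCons.prems by (simp add: pCons_0_eq_w2_mult splitting_map_mult)
    moreover have "w1 \<noteq> 0" "w2 \<noteq> 0"
      by (simp_all add: w1_def w2_def)
    ultimately show ?case
      using pCons.IH \<open>c = 0\<close> by simp
  qed simp
qed (simp add: ring_hom_zero[OF ring_hom_splitting_map])

lemma inj_splitting_map: "inj splitting_map"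
proof (rule injI)
  fix a b
  assume "splitting_map a = splitting_map b"
  then have "a + b = 0"
    by (simp add: splitting_map_add flip: splitting_map_eq_0_iff)
  then show "a = b"
    by (simp add: add_eq_0_iff)
qed

lemma splitting_map_w1_wbar: "splitting_map (w1 * wbar k) = w1 ^ (k + 1) + w2 ^ (k + 1)"
proof -
  have "(w1 + w2) * splitting_map (wbar k) = w1 ^ (k + 1) + w2 ^ (k + 1)"
  proof (induction k rule: wbar.induct)
    case 1
    then show ?case
      by (simp add: ring_hom_one[OF ring_hom_splitting_map])
  next
    case 2
    then show ?case
      by (simp add: power2_eq_square algebra_simps)
  next
    case (3 k)
    have "splitting_map (wbar (Suc (Suc k))) =
        (w1 + w2) * splitting_map (wbar (Suc k)) + w1 * w2 * splitting_map (wbar k)"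
      by (simp add: splitting_map_add splitting_map_mult)
    then have "(w1 + w2) * splitting_map (wbar (Suc (Suc k))) =
        (w1 + w2) * ((w1 + w2) * splitting_map (wbar (Suc k))) +
        w1 * w2 * ((w1 + w2) * splitting_map (wbar k))"
      by (simp add: algebra_simps)
    also have "\<dots> = w1 ^ (k + 3) + w2 ^ (k + 3)"
      by (simp only: 3) (simp add: algebra_simps numeral_3_eq_3)
    finally show ?case
      by (simp add: numeral_3_eq_3)
  qed
  then show ?thesis
    by (simp add: splitting_map_mult)
qed

lemma QP_odd_power_sum:
  "QP n (w1 ^ Suc (2 * l) + w2 ^ Suc (2 * l)) =
    w1 ^ (2 ^ (n + 1) + 2 * l) + w2 ^ (2 ^ (n + 1) + 2 * l)"
proof -
  have "pderiv1 (w1 ^ Suc m) = of_nat (Suc m) * w1 ^ m"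
    and "pderiv (w2 ^ Suc m) = of_nat (Suc m) * w2 ^ m"
    and "pderiv1 (w2 ^ m) = 0" "pderiv (w1 ^ m) = 0" for m
    by (induction m) (simp_all add: pderiv1_mult pderiv_mult algebra_simps)
  then have "QP n (w1 ^ Suc (2 * l) + w2 ^ Suc (2 * l)) =
      w1 ^ 2 ^ (n + 1) * (of_nat (Suc (2 * l)) * w1 ^ (2 * l)) +
      w2 ^ 2 ^ (n + 1) * (of_nat (Suc (2 * l)) * w2 ^ (2 * l))"
    by (simp only: QP_def pderiv1_add pderiv_add add_0 add_0_right)
  then show ?thesis
    by (simp add: of_nat_char2 power_add del: of_nat_Suc)
qed

theorem proposition5p7:
  fixes n l :: nat
  shows "Q n (w1 * wbar (2*l)) = w1 * wbar (2^(n+1) - 1 + 2*l)"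
proof -
  have "2 ^ (n + 1) - 1 + 2 * l + 1 = 2 ^ (n + 1) + 2 * l"
    by simp
  then have "splitting_map (Q n (w1 * wbar (2 * l))) =
      splitting_map (w1 * wbar (2 ^ (n + 1) - 1 + 2 * l))"
    by (simp only: splitting_map_Q splitting_map_w1_wbar Suc_eq_plus1[symmetric] QP_odd_power_sum)
  then show ?thesis
    by (simp add: inj_eq[OF inj_splitting_map])
qed

end
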